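(* Let $F$ be a graph and let $(G,\varphi)$ and $(G,\psi)$ be two $k$-token reconstructions of $F$. Then $(G,\varphi)$ and $(G,\psi)$ are equivalent if and only if $\mathcal{R}_\varphi=\mathcal{R}_\psi$ or $\mathcal{R}_\varphi=\overline{\mathcal{R}_\psi}$.
   Context: $F_k(G)$ is the graph on the $k$-subsets of $V(G)$ in which $A,B$ are adjacent iff $A\triangle B$ is an edge of $G$. A $k$-token reconstruction of $F$ is a pair $(G',\varphi)$ with $\varphi$ an isomorphism $F\to F_k(G')$. For an isomorphism $s$ between graphs, $\iota(s)$ maps a $k$-set $A$ to $\{s(v):v\in A\}$; $\mathfrak{c}$ maps a $k$-subset $A$ of $V(G)$ to $V(G)\setminus A$. Two $k$-token reconstructions $(G,\varphi),(G,\psi)$ of $F$ are equivalent if there is $s\in\operatorname{Aut}(G)$ with $\psi=\iota(s)\circ\varphi$ or $\psi=\mathfrak{c}\circ\iota(s)\circ\varphi$. For $u\in V(G)$ let $\kappa_G(u,k)=\{A\in V(F_k(G)):u\in A\}$. For a reconstruction $(G,\varphi)$ let $\mathcal{R}_\varphi=\{\varphi^{-1}(\kappa_G(u,k)):u\in V(G)\}$, and for a family $\mathcal{R}$ of subsets of $V(F)$ let $\overline{\mathcal{R}}=\{V(F)\setminus X:X\in\mathcal{R}\}$. *)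

theory Defs
  imports Main
begin

type_synonym 'a graph = "'a set \<times> 'a set set"

definition verts :: "'a graph \<Rightarrow> 'a set" where "verts G = fst G"
definition edges :: "'a graph \<Rightarrow> 'a set set" where "edges G = snd G"

definition graph :: "'a graph \<Rightarrow> bool" where
  "graph G \<longleftrightarrow> finite (verts G) \<and>
     (\<forall>e\<in>edges G. e \<subseteq> verts G \<and> card e = 2)"

definition token_graph :: "nat \<Rightarrow> 'a graph \<Rightarrow> 'a set graph" where
  "token_graph k G =
     ({A. A \<subseteq> verts G \<and> card A = k},
      {{A, B} | A B. A \<subseteq> verts G \<and> card A = k \<and> B \<subseteq> verts G \<and> card B = k
                   \<and> (A - B) \<union> (B - A) \<in> edges G})"

definition graph_iso :: "'a graph \<Rightarrow> 'b graph \<Rightarrow> ('a \<Rightarrow> 'b) \<Rightarrow> bool" where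
  "graph_iso F H f \<longleftrightarrow> bij_betw f (verts F) (verts H) \<and>
     (\<forall>x\<in>verts F. \<forall>y\<in>verts F. {x, y} \<in> edges F \<longleftrightarrow> {f x, f y} \<in> edges H)"

definition graph_aut :: "'a graph \<Rightarrow> ('a \<Rightarrow> 'a) \<Rightarrow> bool" where
  "graph_aut G s \<longleftrightarrow> graph_iso G G s"

definition token_reconstruction :: "nat \<Rightarrow> 'a graph \<Rightarrow> 'b graph \<Rightarrow> ('a \<Rightarrow> 'b set) \<Rightarrow> bool" where
  "token_reconstruction k F G \<phi> \<longleftrightarrow> graph G \<and> graph_iso F (token_graph k G) \<phi>"

definition iota :: "('b \<Rightarrow> 'b) \<Rightarrow> 'b set \<Rightarrow> 'b set" where
  "iota s A = s ` A"

definition compl_set :: "'b graph \<Rightarrow> 'b set \<Rightarrow> 'b set" where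
  "compl_set G A = verts G - A"

definition equivalent_recon :: "'a graph \<Rightarrow> 'b graph \<Rightarrow> ('a \<Rightarrow> 'b set) \<Rightarrow> ('a \<Rightarrow> 'b set) \<Rightarrow> bool" where
  "equivalent_recon F G \<phi> \<psi> \<longleftrightarrow> (\<exists>s. graph_aut G s \<and>
      ((\<forall>x\<in>verts F. \<psi> x = iota s (\<phi> x)) \<or>
       (\<forall>x\<in>verts F. \<psi> x = compl_set G (iota s (\<phi> x)))))"

definition kappa :: "'b graph \<Rightarrow> 'b \<Rightarrow> nat \<Rightarrow> 'b set set" where
  "kappa G u k = {A. A \<in> verts (token_graph k G) \<and> u \<in> A}"

definition R_fam :: "nat \<Rightarrow> 'a graph \<Rightarrow> 'b graph \<Rightarrow> ('a \<Rightarrow> 'b set) \<Rightarrow> 'a set set" where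
  "R_fam k F G \<phi> = {{x \<in> verts F. \<phi> x \<in> kappa G u k} | u. u \<in> verts G}"

definition compl_fam :: "'a graph \<Rightarrow> 'a set set \<Rightarrow> 'a set set" where
  "compl_fam F R = {verts F - X | X. X \<in> R}"

end

theory Submission
  imports Defs
begin

(*
  Suppose 0 < k < n = |V(G)|. Then u |-> phi^-1(kappa_G(u,k)) is injective on V(G), so
  R_phi = R_psi yields a permutation s of V(G) with psi^-1(kappa_G(s u,k)) = phi^-1(kappa_G(u,k)),
  which says exactly psi = iota(s) o phi on V(F). This s is an automorphism: every pair uv is the
  symmetric difference of two k-sets, and both reconstructions turn adjacency in F into
  "the symmetric difference is an edge of G". The complemented case is the same statement
  for c o psi, an (n - k)-token reconstruction whose family is the complement of R_psi.
  If k = 0 or k >= n, F_k(G) has at most one vertex, so phi = psi on V(F).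
*)

lemma token_graph_verts: "verts (token_graph k G) = {A. A \<subseteq> verts G \<and> card A = k}"
  by (simp add: token_graph_def verts_def)

lemma token_graph_edge_iff:
  assumes "A \<in> verts (token_graph k G)" "B \<in> verts (token_graph k G)"
  shows "{A, B} \<in> edges (token_graph k G) \<longleftrightarrow> sym_diff A B \<in> edges G"
proof
  assume "{A, B} \<in> edges (token_graph k G)"
  then obtain A' B' where "{A, B} = {A', B'}" "sym_diff A' B' \<in> edges G"
    unfolding token_graph_def edges_def by auto
  then show "sym_diff A B \<in> edges G" by (auto simp: doubleton_eq_iff Un_commute)
next
  assume "sym_diff A B \<in> edges G"
  then show "{A, B} \<in> edges (token_graph k G)"
    using assms unfolding token_graph_def edges_def verts_def by auto
qed

lemma token_graph_verts_unique:
  assumes "finite (verts G)" "\<not> (0 < k \<and> k < card (verts G))"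
    and "A \<in> verts (token_graph k G)" "B \<in> verts (token_graph k G)"
  shows "A = B"
proof -
  have A: "A \<subseteq> verts G" "card A = k" and B: "B \<subseteq> verts G" "card B = k"
    using assms(3,4) by (auto simp: token_graph_verts)
  then have "finite A" "finite B"
    using assms(1) finite_subset by blast+
  consider "k = 0" | "card (verts G) \<le> k" using assms(2) by linarith
  then show ?thesis
  proof cases
    case 1
    then show ?thesis using A B \<open>finite A\<close> \<open>finite B\<close> by simp
  next
    case 2
    then have "A = verts G" "B = verts G"
      using A B assms(1) by (metis card_mono card_subset_eq le_antisym)+
    then show ?thesis by simp
  qed
qed

lemma bij_betw_compl_set_token_graph_verts:
  assumes "finite (verts G)" "k \<le> card (verts G)"
  shows "bij_betw (compl_set G) (verts (token_graph k G)) (verts (token_graph (card (verts G) - k) G))"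
proof (rule bij_betw_byWitness[where f' = "compl_set G"])
  have card_compl: "card (verts G - A) = card (verts G) - card A" if "A \<subseteq> verts G" for A
    using that assms(1) by (simp add: card_Diff_subset finite_subset)
  show "compl_set G ` verts (token_graph k G) \<subseteq> verts (token_graph (card (verts G) - k) G)"
    by (auto simp: token_graph_verts compl_set_def card_compl)
  show "compl_set G ` verts (token_graph (card (verts G) - k) G) \<subseteq> verts (token_graph k G)"
  proof
    fix A assume "A \<in> compl_set G ` verts (token_graph (card (verts G) - k) G)"
    then obtain B where B: "B \<subseteq> verts G" "card B = card (verts G) - k" "A = verts G - B"
      by (auto simp: token_graph_verts compl_set_def)
    then have "card A = k" using assms(2) card_compl by simp
    then show "A \<in> verts (token_graph k G)" using B by (auto simp: token_graph_verts)
  qed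
qed (auto simp: token_graph_verts compl_set_def)

lemma token_reconstruction_subset:
  assumes "token_reconstruction k F G \<phi>" "x \<in> verts F"
  shows "\<phi> x \<subseteq> verts G"
  using assms bij_betwE[of \<phi> "verts F" "verts (token_graph k G)"]
  by (auto simp: token_reconstruction_def graph_iso_def token_graph_verts)

lemma token_reconstruction_surj:
  assumes "token_reconstruction k F G \<phi>" "A \<subseteq> verts G" "card A = k"
  obtains x where "x \<in> verts F" "\<phi> x = A"
proof -
  have "A \<in> \<phi> ` verts F"
    using assms bij_betw_imp_surj_on[of \<phi> "verts F" "verts (token_graph k G)"]
    by (simp add: token_reconstruction_def graph_iso_def token_graph_verts)
  then show ?thesis using that by blast
qed

lemma token_reconstruction_edge_iff:
  assumes "token_reconstruction k F G \<phi>" "x \<in> verts F" "y \<in> verts F"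
  shows "{x, y} \<in> edges F \<longleftrightarrow> sym_diff (\<phi> x) (\<phi> y) \<in> edges G"
proof -
  have "\<phi> x \<in> verts (token_graph k G)" "\<phi> y \<in> verts (token_graph k G)"
    using assms by (auto simp: token_reconstruction_def graph_iso_def dest: bij_betwE)
  then show ?thesis
    using assms token_graph_edge_iff
    by (simp add: token_reconstruction_def graph_iso_def)
qed

lemma token_reconstruction_compl:
  assumes "token_reconstruction k F G \<phi>" "k \<le> card (verts G)"
  shows "token_reconstruction (card (verts G) - k) F G (compl_set G \<circ> \<phi>)"
proof -
  have fin: "finite (verts G)"
    using assms(1) by (simp add: token_reconstruction_def graph_def)
  have bij: "bij_betw (compl_set G \<circ> \<phi>) (verts F) (verts (token_graph (card (verts G) - k) G))"
    using assms(1) bij_betw_compl_set_token_graph_verts[OF fin assms(2)]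
    by (auto simp: token_reconstruction_def graph_iso_def intro: bij_betw_trans)
  moreover have "{x, y} \<in> edges F \<longleftrightarrow>
      {compl_set G (\<phi> x), compl_set G (\<phi> y)} \<in> edges (token_graph (card (verts G) - k) G)"
    if "x \<in> verts F" "y \<in> verts F" for x y
  proof -
    have "sym_diff (compl_set G (\<phi> x)) (compl_set G (\<phi> y)) = sym_diff (\<phi> x) (\<phi> y)"
      using that token_reconstruction_subset[OF assms(1)] by (auto simp: compl_set_def)
    moreover have c: "compl_set G (\<phi> x) \<in> verts (token_graph (card (verts G) - k) G)"
      "compl_set G (\<phi> y) \<in> verts (token_graph (card (verts G) - k) G)"
      using bij that by (auto dest: bij_betwE)
    ultimately show ?thesis
      using that token_reconstruction_edge_iff[OF assms(1)] token_graph_edge_iff[OF c] by simp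
  qed
  ultimately show ?thesis
    using assms(1) bij by (simp add: token_reconstruction_def graph_iso_def)
qed

lemma token_reconstructions_eq_if_trivial:
  assumes "token_reconstruction k F G \<phi>" "token_reconstruction k F G \<psi>"
    and "\<not> (0 < k \<and> k < card (verts G))" "x \<in> verts F"
  shows "\<psi> x = \<phi> x"
proof (rule token_graph_verts_unique[OF _ assms(3)])
  show "finite (verts G)"
    using assms(1) by (simp add: token_reconstruction_def graph_def)
  show "\<psi> x \<in> verts (token_graph k G)" "\<phi> x \<in> verts (token_graph k G)"
    using assms(1,2,4) by (auto simp: token_reconstruction_def graph_iso_def dest: bij_betwE)
qed

lemma obtain_separating_subset:
  assumes "finite V" "0 < k" "k < card V" "u \<in> V" "v \<in> V" "u \<noteq> v"
  obtains A where "A \<subseteq> V" "card A = k" "u \<in> A" "v \<notin> A"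
proof -
  have "k - 1 \<le> card (V - {u, v})"
    using assms by (simp add: card_Diff_subset)
  then obtain C where C: "C \<subseteq> V - {u, v}" "card C = k - 1"
    by (meson obtain_subset_with_card_n)
  then have "card (insert u C) = k"
    using assms(1,2) finite_subset by (subst card_insert_disjoint) auto
  then show ?thesis
    using C assms(4,6) that[of "insert u C"] by auto
qed

lemma obtain_token_pair_sym_diff:
  assumes "finite V" "0 < k" "k < card V" "u \<in> V" "v \<in> V" "u \<noteq> v"
  obtains A B where "A \<subseteq> V" "card A = k" "B \<subseteq> V" "card B = k" "sym_diff A B = {u, v}"
proof -
  obtain A where A: "A \<subseteq> V" "card A = k" "u \<in> A" "v \<notin> A"
    using obtain_separating_subset[OF assms] .
  have "finite A" using A(1) assms(1) finite_subset by blast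
  then have "card (insert v (A - {u})) = k"
    using A assms(2) by simp
  moreover have "sym_diff A (insert v (A - {u})) = {u, v}"
    using A assms(6) by auto
  ultimately show ?thesis
    using A assms(5) that[of A "insert v (A - {u})"] by blast
qed

definition kappa_preimage :: "'a graph \<Rightarrow> ('a \<Rightarrow> 'b set) \<Rightarrow> 'b \<Rightarrow> 'a set" where
  "kappa_preimage F \<phi> u = {x \<in> verts F. u \<in> \<phi> x}"

lemma R_fam_eq_image_kappa_preimage:
  assumes "token_reconstruction k F G \<phi>"
  shows "R_fam k F G \<phi> = kappa_preimage F \<phi> ` verts G"
proof -
  have "\<phi> x \<in> verts (token_graph k G)" if "x \<in> verts F" for x
    using assms that by (auto simp: token_reconstruction_def graph_iso_def dest: bij_betwE)
  then show ?thesis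
    unfolding R_fam_def kappa_def kappa_preimage_def by auto
qed

lemma compl_fam_image_kappa_preimage:
  "compl_fam F (kappa_preimage F \<psi> ` verts G) = kappa_preimage F (compl_set G \<circ> \<psi>) ` verts G"
  by (auto simp: compl_fam_def kappa_preimage_def compl_set_def)

lemma inj_on_kappa_preimage:
  assumes "token_reconstruction k F G \<phi>" "0 < k" "k < card (verts G)"
  shows "inj_on (kappa_preimage F \<phi>) (verts G)"
proof (rule inj_onI, rule ccontr)
  fix u v
  assume uv: "u \<in> verts G" "v \<in> verts G" "u \<noteq> v"
    and eq: "kappa_preimage F \<phi> u = kappa_preimage F \<phi> v"
  have "finite (verts G)"
    using assms(1) by (simp add: token_reconstruction_def graph_def)
  then obtain A where A: "A \<subseteq> verts G" "card A = k" "u \<in> A" "v \<notin> A"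
    using obtain_separating_subset[OF _ assms(2,3) uv] by blast
  obtain x where "x \<in> verts F" "\<phi> x = A"
    using token_reconstruction_surj[OF assms(1) A(1,2)] .
  then show False
    using eq A(3,4) by (auto simp: kappa_preimage_def)
qed

lemma iota_relates_iff_kappa_preimage:
  assumes s: "bij_betw s (verts G) (verts G)"
    and "\<And>x. x \<in> verts F \<Longrightarrow> \<phi> x \<subseteq> verts G"
    and "\<And>x. x \<in> verts F \<Longrightarrow> \<psi> x \<subseteq> verts G"
  shows "(\<forall>x\<in>verts F. \<psi> x = iota s (\<phi> x)) \<longleftrightarrow>
         (\<forall>u\<in>verts G. kappa_preimage F \<psi> (s u) = kappa_preimage F \<phi> u)"
proof -
  have mem: "s u \<in> s ` \<phi> x \<longleftrightarrow> u \<in> \<phi> x" if "x \<in> verts F" "u \<in> verts G" for x u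
    using inj_on_image_mem_iff[OF bij_betw_imp_inj_on[OF s]] assms(2) that by blast
  have "\<psi> x = s ` \<phi> x \<longleftrightarrow> (\<forall>u\<in>verts G. s u \<in> \<psi> x \<longleftrightarrow> u \<in> \<phi> x)" if "x \<in> verts F" for x
  proof -
    have "s ` \<phi> x \<subseteq> verts G"
      using assms(2) that bij_betwE[OF s] by blast
    then have "\<psi> x = s ` \<phi> x \<longleftrightarrow> (\<forall>v\<in>verts G. v \<in> \<psi> x \<longleftrightarrow> v \<in> s ` \<phi> x)"
      using assms(3) that by blast
    also have "\<dots> \<longleftrightarrow> (\<forall>u\<in>verts G. s u \<in> \<psi> x \<longleftrightarrow> s u \<in> s ` \<phi> x)"
      using bij_betw_imp_surj_on[OF s] by (metis (no_types, lifting) imageE imageI)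
    finally show ?thesis
      using mem that by simp
  qed
  then show ?thesis
    unfolding iota_def kappa_preimage_def by blast
qed

lemma obtain_bij_betw_relabelling:
  assumes "inj_on X V" "inj_on Y V" "X ` V = Y ` V"
  obtains s where "bij_betw s V V" "\<And>u. u \<in> V \<Longrightarrow> Y (s u) = X u"
proof
  have "bij_betw Y V (X ` V)" "bij_betw X V (X ` V)"
    using assms by (simp_all add: bij_betw_imageI)
  then show "bij_betw (inv_into V Y \<circ> X) V V"
    using bij_betw_inv_into bij_betw_trans by blast
  show "Y ((inv_into V Y \<circ> X) u) = X u" if "u \<in> V" for u
    using that assms(3) by (metis comp_apply f_inv_into_f imageI)
qed

lemma image_sym_diff_inj_on:
  assumes "inj_on s V" "A \<subseteq> V" "B \<subseteq> V"
  shows "s ` sym_diff A B = sym_diff (s ` A) (s ` B)"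
proof -
  have "s ` (A - B) = s ` A - s ` B" "s ` (B - A) = s ` B - s ` A"
    using assms inj_on_image_set_diff[of s V] by blast+
  then show ?thesis by (simp add: image_Un)
qed

lemma graph_aut_if_iota_relates:
  assumes \<phi>: "token_reconstruction k F G \<phi>" and \<psi>: "token_reconstruction k' F G \<psi>"
    and k: "0 < k" "k < card (verts G)"
    and s: "bij_betw s (verts G) (verts G)"
    and relabel: "\<forall>x\<in>verts F. \<psi> x = iota s (\<phi> x)"
  shows "graph_aut G s"
  unfolding graph_aut_def graph_iso_def
proof (intro conjI s ballI)
  fix u v assume u: "u \<in> verts G" and v: "v \<in> verts G"
  have "graph G" using \<phi> by (simp add: token_reconstruction_def)
  then have fin: "finite (verts G)" and no_loop: "\<And>w. {w} \<notin> edges G"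
    by (auto simp: graph_def)
  show "{u, v} \<in> edges G \<longleftrightarrow> {s u, s v} \<in> edges G"
  proof (cases "u = v")
    case True
    then show ?thesis using no_loop by simp
  next
    case False
    obtain A B where A: "A \<subseteq> verts G" "card A = k" and B: "B \<subseteq> verts G" "card B = k"
      and AB: "sym_diff A B = {u, v}"
      using obtain_token_pair_sym_diff[OF fin k u v False] .
    obtain x where x: "x \<in> verts F" "\<phi> x = A"
      using token_reconstruction_surj[OF \<phi> A] .
    obtain y where y: "y \<in> verts F" "\<phi> y = B"
      using token_reconstruction_surj[OF \<phi> B] .
    have "sym_diff (\<psi> x) (\<psi> y) = sym_diff (s ` A) (s ` B)"
      using relabel x y by (simp add: iota_def)
    also have "\<dots> = s ` {u, v}"
      using image_sym_diff_inj_on[OF bij_betw_imp_inj_on[OF s] A(1) B(1)] AB by simp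
    finally have sd: "sym_diff (\<psi> x) (\<psi> y) = {s u, s v}" by simp
    have "{u, v} \<in> edges G \<longleftrightarrow> {x, y} \<in> edges F"
      using token_reconstruction_edge_iff[OF \<phi> x(1) y(1)] x(2) y(2) AB by simp
    also have "\<dots> \<longleftrightarrow> sym_diff (\<psi> x) (\<psi> y) \<in> edges G"
      using token_reconstruction_edge_iff[OF \<psi> x(1) y(1)] .
    finally show ?thesis using sd by simp
  qed
qed

definition aut_equivalent :: "'a graph \<Rightarrow> 'b graph \<Rightarrow> ('a \<Rightarrow> 'b set) \<Rightarrow> ('a \<Rightarrow> 'b set) \<Rightarrow> bool" where
  "aut_equivalent F G \<phi> \<psi> \<longleftrightarrow> (\<exists>s. graph_aut G s \<and> (\<forall>x\<in>verts F. \<psi> x = iota s (\<phi> x)))"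

lemma aut_equivalent_if_eq_on:
  assumes "\<And>x. x \<in> verts F \<Longrightarrow> \<psi> x = \<phi> x"
  shows "aut_equivalent F G \<phi> \<psi>"
  unfolding aut_equivalent_def
proof (intro exI conjI)
  show "graph_aut G id"
    by (simp add: graph_aut_def graph_iso_def)
  show "\<forall>x\<in>verts F. \<psi> x = iota id (\<phi> x)"
    using assms by (simp add: iota_def)
qed

lemma equivalent_recon_iff_aut_equivalent:
  assumes "\<And>x. x \<in> verts F \<Longrightarrow> \<phi> x \<subseteq> verts G"
    and "\<And>x. x \<in> verts F \<Longrightarrow> \<psi> x \<subseteq> verts G"
  shows "equivalent_recon F G \<phi> \<psi> \<longleftrightarrow>
         aut_equivalent F G \<phi> \<psi> \<or> aut_equivalent F G \<phi> (compl_set G \<circ> \<psi>)"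
proof -
  have "(\<forall>x\<in>verts F. \<psi> x = compl_set G (iota s (\<phi> x))) \<longleftrightarrow>
        (\<forall>x\<in>verts F. (compl_set G \<circ> \<psi>) x = iota s (\<phi> x))"
    if "graph_aut G s" for s
  proof -
    have "iota s (\<phi> x) \<subseteq> verts G" if "x \<in> verts F" for x
      using \<open>graph_aut G s\<close> assms(1)[OF that] bij_betwE
      by (fastforce simp: graph_aut_def graph_iso_def iota_def)
    then show ?thesis
      using assms(2) by (auto simp: compl_set_def)
  qed
  then show ?thesis
    unfolding equivalent_recon_def aut_equivalent_def by blast
qed

lemma aut_equivalent_iff_kappa_preimages:
  assumes \<phi>: "token_reconstruction k F G \<phi>" and \<psi>: "token_reconstruction k' F G \<psi>"
    and k: "0 < k" "k < card (verts G)" and k': "0 < k'" "k' < card (verts G)"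
  shows "aut_equivalent F G \<phi> \<psi> \<longleftrightarrow>
         kappa_preimage F \<phi> ` verts G = kappa_preimage F \<psi> ` verts G"
proof
  assume "aut_equivalent F G \<phi> \<psi>"
  then obtain s where "graph_aut G s" and relabel: "\<forall>x\<in>verts F. \<psi> x = iota s (\<phi> x)"
    by (auto simp: aut_equivalent_def)
  then have s: "bij_betw s (verts G) (verts G)"
    by (simp add: graph_aut_def graph_iso_def)
  have "kappa_preimage F \<psi> (s u) = kappa_preimage F \<phi> u" if "u \<in> verts G" for u
    using relabel that iota_relates_iff_kappa_preimage[where \<phi> = \<phi> and \<psi> = \<psi>, OF s
        token_reconstruction_subset[OF \<phi>] token_reconstruction_subset[OF \<psi>]] by blast
  then have "kappa_preimage F \<psi> ` (s ` verts G) = kappa_preimage F \<phi> ` verts G"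
    by (simp add: image_image)
  then show "kappa_preimage F \<phi> ` verts G = kappa_preimage F \<psi> ` verts G"
    using bij_betw_imp_surj_on[OF s] by simp
next
  assume "kappa_preimage F \<phi> ` verts G = kappa_preimage F \<psi> ` verts G"
  then obtain s where s: "bij_betw s (verts G) (verts G)"
    and "\<And>u. u \<in> verts G \<Longrightarrow> kappa_preimage F \<psi> (s u) = kappa_preimage F \<phi> u"
    using obtain_bij_betw_relabelling[OF inj_on_kappa_preimage[OF \<phi> k]
        inj_on_kappa_preimage[OF \<psi> k']] by blast
  then have "\<forall>x\<in>verts F. \<psi> x = iota s (\<phi> x)"
    using iota_relates_iff_kappa_preimage[where \<phi> = \<phi> and \<psi> = \<psi>, OF s
        token_reconstruction_subset[OF \<phi>] token_reconstruction_subset[OF \<psi>]] by blast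
  moreover have "graph_aut G s"
    using graph_aut_if_iota_relates[OF \<phi> \<psi> k s] calculation .
  ultimately show "aut_equivalent F G \<phi> \<psi>"
    by (auto simp: aut_equivalent_def)
qed

theorem proposition13:
  fixes F :: "'a graph" and G :: "'b graph" and k :: nat
    and \<phi> \<psi> :: "'a \<Rightarrow> 'b set"
  assumes "graph F"
    and "token_reconstruction k F G \<phi>"
    and "token_reconstruction k F G \<psi>"
  shows "equivalent_recon F G \<phi> \<psi> \<longleftrightarrow>
           (R_fam k F G \<phi> = R_fam k F G \<psi> \<or> R_fam k F G \<phi> = compl_fam F (R_fam k F G \<psi>))"
proof -
  note \<phi> = assms(2) and \<psi> = assms(3)
  let ?P = "\<lambda>\<chi>. kappa_preimage F \<chi> ` verts G" and ?n = "card (verts G)"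
  have equiv: "equivalent_recon F G \<phi> \<psi> \<longleftrightarrow>
      aut_equivalent F G \<phi> \<psi> \<or> aut_equivalent F G \<phi> (compl_set G \<circ> \<psi>)"
    using equivalent_recon_iff_aut_equivalent[where \<phi> = \<phi> and \<psi> = \<psi>,
        OF token_reconstruction_subset[OF \<phi>] token_reconstruction_subset[OF \<psi>]] .
  have R: "R_fam k F G \<phi> = ?P \<phi>" "R_fam k F G \<psi> = ?P \<psi>"
    "compl_fam F (R_fam k F G \<psi>) = ?P (compl_set G \<circ> \<psi>)"
    using R_fam_eq_image_kappa_preimage[OF \<phi>] R_fam_eq_image_kappa_preimage[OF \<psi>]
      compl_fam_image_kappa_preimage by simp_all
  show ?thesis
  proof (cases "0 < k \<and> k < ?n")
    case True
    then have k: "0 < k" "k < ?n" and k': "0 < ?n - k" "?n - k < ?n"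
      by auto
    have \<psi>': "token_reconstruction (?n - k) F G (compl_set G \<circ> \<psi>)"
      using token_reconstruction_compl[OF \<psi>] k by simp
    show ?thesis
      using equiv R aut_equivalent_iff_kappa_preimages[OF \<phi> \<psi> k k]
        aut_equivalent_iff_kappa_preimages[OF \<phi> \<psi>' k k'] by simp
  next
    case False
    then have "\<And>x. x \<in> verts F \<Longrightarrow> \<psi> x = \<phi> x"
      using token_reconstructions_eq_if_trivial[OF \<phi> \<psi>] by blast
    then have "aut_equivalent F G \<phi> \<psi>" and "?P \<phi> = ?P \<psi>"
      by (auto simp: aut_equivalent_if_eq_on kappa_preimage_def)
    then show ?thesis
      using equiv R by simp
  qed
qed

end
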